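(* For all positive integers $m$ and $n$, $$\sum_{k=1}^nH_k\sum_{j=m}^{n-k+1}\binom{n-k}{j-1}\frac{s(j,m)}{j!}=\frac{1}{m!}H_{n+1}(m+1).$$ In particular, $\sum_{k=1}^n\frac{H_k}{n-k+1}=H_{n+1}^2-H_{n+1}^{(2)}$.
   Context: For integers $m\ge 1$, $n\ge 0$, the multiple harmonic-like numbers are $H_n(m)=\sum_{1\le k_1+k_2+\cdots+k_m\le n}\frac{1}{k_1k_2\cdots k_m}$ (sum over positive integers $k_1,\dots,k_m$), with $H_n(0)=1$ for $n\ge 0$ and $H_0(m)=0$ for $m\ge1$. $H_n=\sum_{k=1}^n\frac1k$, $H_n^{(2)}=\sum_{k=1}^n\frac1{k^2}$. The (signed) Stirling numbers of the first kind $s(n,k)$ are defined by $\sum_{n\ge k}s(n,k)\frac{z^n}{n!}=\frac{\ln^k(1+z)}{k!}$, with $s(n,k)=0$ for $n<k$. *)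

theory Defs
  imports "HOL-Analysis.Analysis" "HOL-Combinatorics.Stirling"
begin

definition stirling1s :: "nat \<Rightarrow> nat \<Rightarrow> real" where
  "stirling1s n k = (-1) ^ (n - k) * real (stirling n k)"

text \<open>Multiple harmonic-like numbers H_n(m): sum over (k_1..k_m) positive integers
  with k_1+...+k_m \<le> n of 1/(k_1...k_m). Tuples are functions on {..<m} (extensional).\<close>
definition mharm :: "nat \<Rightarrow> nat \<Rightarrow> real" where
  "mharm n m = (\<Sum>k\<in>{k \<in> {..<m} \<rightarrow>\<^sub>E {1..n}. (\<Sum>i<m. k i) \<le> n}.
                   1 / (\<Prod>i<m. real (k i)))"

definition harm2 :: "nat \<Rightarrow> real" where
  "harm2 n = (\<Sum>k=1..n. 1 / (real k)^2)"

end

theory Submission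
  imports Defs
begin

text \<open>Write \<open>L(z) = -ln(1 - z)\<close>. Then \<open>stirling p m / p!\<close> is the coefficient of \<open>z^p\<close>
  in \<open>L^m / m!\<close>, the harmonic numbers are the coefficients of \<open>L / (1 - z)\<close>, and \<open>H_N(m)\<close> is
  the coefficient of \<open>z^N\<close> in \<open>L^m / (1 - z)\<close>. Inverting \<open>stirling n m = sum_j L(n,j) s(j,m)\<close>
  through the Lah numbers turns the inner sum over \<open>j\<close> into \<open>stirling (n-k+1) m / (n-k+1)!\<close>,
  so the left-hand side is the coefficient of \<open>z^(n+1)\<close> in \<open>(L / (1 - z)) * L^m / m!\<close>,
  i.e. \<open>H_(n+1)(m+1) / m!\<close>. Instead of formal power series, every coefficient identity is
  proved by a recurrence in the index.\<close>

lemma sum_reflect_from_1: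
  fixes g :: "nat \<Rightarrow> 'a::comm_monoid_add"
  shows "(\<Sum>a=1..p. g (p - a)) = (\<Sum>i<p. g i)"
  by (rule sum.reindex_bij_witness[where i="\<lambda>i. p - i" and j="\<lambda>a. p - a"]) auto

definition stirling_coeff :: "nat \<Rightarrow> nat \<Rightarrow> real" where
  "stirling_coeff p m = real (stirling p m) / fact p"

lemma stirling_coeff_Suc_Suc:
  "real (Suc p) * stirling_coeff (Suc p) (Suc m) = real p * stirling_coeff p (Suc m) + stirling_coeff p m"
  by (simp add: stirling_coeff_def field_simps del: of_nat_Suc)

lemma stirling_coeff_0_Suc [simp]: "stirling_coeff 0 (Suc m) = 0"
  by (simp add: stirling_coeff_def)

lemma stirling_coeff_0_right: "stirling_coeff p 0 = (if p = 0 then 1 else 0)"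
  by (cases p) (auto simp: stirling_coeff_def)

lemma stirling_coeff_1: "p \<ge> 1 \<Longrightarrow> stirling_coeff p 1 = 1 / real p"
proof (cases p)
  case (Suc q)
  then show ?thesis
    by (simp only: stirling_coeff_def One_nat_def stirling_Suc_n_1 of_nat_fact fact_Suc)
      (simp add: field_simps del: of_nat_Suc)
qed simp

lemma sum_stirling_coeff_div_Suc:
  "real (Suc p) * (\<Sum>a=1..Suc p. stirling_coeff (Suc p - a) (Suc m) / a)
   = real p * (\<Sum>a=1..p. stirling_coeff (p - a) (Suc m) / a)
     + (\<Sum>a=1..p. stirling_coeff (p - a) m / a) + stirling_coeff p (Suc m)"
proof -
  let ?c = stirling_coeff
  have "(\<Sum>a=1..Suc p. ?c (Suc p - a) (Suc m) / a) = (\<Sum>a=1..p. ?c (Suc (p - a)) (Suc m) / a)"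
    by (simp add: sum.cl_ivl_Suc Suc_diff_le)
  then have "real (Suc p) * (\<Sum>a=1..Suc p. ?c (Suc p - a) (Suc m) / a)
        = (\<Sum>a=1..p. real (Suc p) * ?c (Suc (p - a)) (Suc m) / a)"
    by (simp add: sum_distrib_left)
  also have "\<dots> = (\<Sum>a=1..p. real p * (?c (p - a) (Suc m) / a) + ?c (p - a) m / a
                     + (?c (Suc (p - a)) (Suc m) - ?c (p - a) (Suc m)))"
  proof (rule sum.cong)
    fix a assume a: "a \<in> {1..p}"
    then have e: "real (Suc p) = real (Suc (p - a)) + real a" "real p = real (p - a) + real a"
      by auto
    from a show "real (Suc p) * ?c (Suc (p - a)) (Suc m) / a
          = real p * (?c (p - a) (Suc m) / a) + ?c (p - a) m / a
            + (?c (Suc (p - a)) (Suc m) - ?c (p - a) (Suc m))"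
      unfolding e using stirling_coeff_Suc_Suc[of "p - a" m] by (simp add: field_simps)
  qed simp
  also have "\<dots> = real p * (\<Sum>a=1..p. ?c (p - a) (Suc m) / a) + (\<Sum>a=1..p. ?c (p - a) m / a)
                   + (\<Sum>a=1..p. ?c (Suc (p - a)) (Suc m) - ?c (p - a) (Suc m))"
    by (simp add: sum.distrib sum_distrib_left)
  also have "(\<Sum>a=1..p. ?c (Suc (p - a)) (Suc m) - ?c (p - a) (Suc m)) = ?c p (Suc m)"
    unfolding sum_reflect_from_1[where g="\<lambda>i. ?c (Suc i) (Suc m) - ?c i (Suc m)"]
    using sum_lessThan_telescope[of "\<lambda>i. ?c i (Suc m)" p] by simp
  finally show ?thesis .
qed

lemma sum_stirling_coeff_div:
  "(\<Sum>a=1..p. stirling_coeff (p - a) m / a) = real (Suc m) * stirling_coeff p (Suc m)"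
proof (induction m arbitrary: p)
  case 0
  have "(\<Sum>a=1..p. stirling_coeff (p - a) 0 / a) = (\<Sum>a\<in>{1..p}. if a = p then 1 / real a else 0)"
    by (rule sum.cong) (auto simp: stirling_coeff_0_right)
  then show ?case
    using stirling_coeff_1[of p] by (cases "p = 0") auto
next
  case (Suc m)
  note IH_m = Suc.IH
  show ?case
  proof (induction p)
    case (Suc p)
    have "real (Suc p) * (\<Sum>a=1..Suc p. stirling_coeff (Suc p - a) (Suc m) / a)
          = real p * (\<Sum>a=1..p. stirling_coeff (p - a) (Suc m) / a)
            + (\<Sum>a=1..p. stirling_coeff (p - a) m / a) + stirling_coeff p (Suc m)"
      by (rule sum_stirling_coeff_div_Suc)
    also have "\<dots> = real (Suc (Suc m)) * (real p * stirling_coeff p (Suc (Suc m)) + stirling_coeff p (Suc m))"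
      by (simp only: Suc.IH IH_m) (simp add: algebra_simps)
    also have "\<dots> = real (Suc p) * (real (Suc (Suc m)) * stirling_coeff (Suc p) (Suc (Suc m)))"
      by (simp only: mult.left_commute[of "real (Suc p)"] stirling_coeff_Suc_Suc)
    finally show ?case by (simp del: of_nat_Suc)
  qed simp
qed

definition mharm_tuples :: "nat \<Rightarrow> nat \<Rightarrow> (nat \<Rightarrow> nat) set" where
  "mharm_tuples N m = {k \<in> {..<m} \<rightarrow>\<^sub>E {1..N}. (\<Sum>i<m. k i) \<le> N}"

lemma mharm_eq_sum_mharm_tuples: "mharm N m = (\<Sum>k\<in>mharm_tuples N m. 1 / (\<Prod>i<m. real (k i)))"
  by (simp add: mharm_def mharm_tuples_def)

lemma finite_mharm_tuples: "finite (mharm_tuples N m)"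
  unfolding mharm_tuples_def by (rule finite_subset[of _ "{..<m} \<rightarrow>\<^sub>E {1..N}"]) (auto intro: finite_PiE)

lemma fun_upd_in_mharm_tuples:
  assumes a: "a \<in> {1..N}" and g: "g \<in> mharm_tuples (N - a) m"
  shows "g(m := a) \<in> mharm_tuples N (Suc m)"
proof -
  have "(\<Sum>i<m. (g(m := a)) i) = (\<Sum>i<m. g i)"
    by (rule sum.cong) auto
  then have "(\<Sum>i<Suc m. (g(m := a)) i) = (\<Sum>i<m. g i) + a"
    by simp
  with a g show ?thesis
    by (force simp: mharm_tuples_def PiE_iff extensional_def less_Suc_eq)
qed

lemma fun_upd_undefined_in_mharm_tuples:
  assumes k: "k \<in> mharm_tuples N (Suc m)"
  shows "k m \<in> {1..N}" and "k(m := undefined) \<in> mharm_tuples (N - k m) m"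
proof -
  have sum_k: "(\<Sum>i<m. k i) + k m \<le> N" and k_PiE: "k \<in> {..<Suc m} \<rightarrow>\<^sub>E {1..N}"
    using k by (simp_all add: mharm_tuples_def)
  show "k m \<in> {1..N}"
    using k_PiE by (simp add: PiE_iff)
  have "k i \<le> N - k m" if "i < m" for i
    using member_le_sum[of i "{..<m}" k] that sum_k by simp
  moreover have "(\<Sum>i<m. (k(m := undefined)) i) = (\<Sum>i<m. k i)"
    by (rule sum.cong) auto
  ultimately show "k(m := undefined) \<in> mharm_tuples (N - k m) m"
    using k_PiE sum_k by (auto simp: mharm_tuples_def PiE_iff extensional_def)
qed

lemma bij_betw_mharm_tuples_Suc:
  "bij_betw (\<lambda>(a, g). g(m := a)) (SIGMA a:{1..N}. mharm_tuples (N - a) m) (mharm_tuples N (Suc m))"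
proof (rule bij_betw_byWitness[where f' = "\<lambda>k. (k m, k(m := undefined))"])
  show "\<forall>x\<in>(SIGMA a:{1..N}. mharm_tuples (N - a) m). (\<lambda>k. (k m, k(m := undefined))) ((\<lambda>(a, g). g(m := a)) x) = x"
    by (auto simp: mharm_tuples_def PiE_iff extensional_def fun_eq_iff)
qed (auto simp: fun_upd_in_mharm_tuples fun_upd_undefined_in_mharm_tuples(2)
        dest: fun_upd_undefined_in_mharm_tuples(1))

lemma mharm_0: "mharm N 0 = 1"
  by (simp add: mharm_def)

lemma mharm_Suc: "mharm N (Suc m) = (\<Sum>a=1..N. mharm (N - a) m / a)"
proof -
  have "mharm N (Suc m) = (\<Sum>(a, g)\<in>(SIGMA a:{1..N}. mharm_tuples (N - a) m). 1 / (\<Prod>i<Suc m. real ((g(m := a)) i)))"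
    unfolding mharm_eq_sum_mharm_tuples
    by (subst sum.reindex_bij_betw[OF bij_betw_mharm_tuples_Suc, symmetric]) (simp add: case_prod_unfold)
  also have "\<dots> = (\<Sum>a=1..N. \<Sum>g\<in>mharm_tuples (N - a) m. 1 / (\<Prod>i<Suc m. real ((g(m := a)) i)))"
    by (rule sum.Sigma[symmetric]) (auto simp: finite_mharm_tuples)
  also have "\<dots> = (\<Sum>a=1..N. \<Sum>g\<in>mharm_tuples (N - a) m. 1 / (\<Prod>i<m. real (g i)) / a)"
  proof (intro sum.cong refl)
    fix a g
    have "(\<Prod>i<m. real ((g(m := a)) i)) = (\<Prod>i<m. real (g i))"
      by (rule prod.cong) auto
    then show "1 / (\<Prod>i<Suc m. real ((g(m := a)) i)) = 1 / (\<Prod>i<m. real (g i)) / a"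
      by simp
  qed
  also have "\<dots> = (\<Sum>a=1..N. mharm (N - a) m / a)"
    by (simp add: mharm_eq_sum_mharm_tuples sum_divide_distrib)
  finally show ?thesis .
qed

lemma mharm_1: "mharm N 1 = harm N"
  by (simp add: mharm_Suc mharm_0 harm_def divide_inverse)

lemma sum_triangle_by_diagonals:
  fixes f g :: "nat \<Rightarrow> 'a::semiring_0"
  shows "(\<Sum>a=1..N. g a * (\<Sum>p\<le>N - a. f p)) = (\<Sum>q\<le>N. \<Sum>a=1..q. g a * f (q - a))"
proof (induction N)
  case (Suc N)
  have "(\<Sum>a=1..N. g a * (\<Sum>p\<le>Suc N - a. f p))
        = (\<Sum>a=1..N. g a * (\<Sum>p\<le>N - a. f p)) + (\<Sum>a=1..N. g a * f (Suc N - a))"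
    by (subst sum.distrib[symmetric], rule sum.cong) (auto simp: Suc_diff_le distrib_left)
  then show ?case
    using Suc.IH by (simp add: sum.cl_ivl_Suc add.assoc)
qed simp

lemma sum_triangle_by_partial_sums:
  fixes f g :: "nat \<Rightarrow> 'a::semiring_0"
  shows "(\<Sum>a=1..N. g a * (\<Sum>p\<le>N - a. f p)) = (\<Sum>k=1..N. (\<Sum>a=1..k. g a) * f (N - k))"
proof (induction N arbitrary: f)
  case (Suc N)
  have "(\<Sum>a=1..N. g a * (\<Sum>p\<le>Suc N - a. f p))
        = (\<Sum>a=1..N. g a) * f 0 + (\<Sum>a=1..N. g a * (\<Sum>p\<le>N - a. f (Suc p)))"
  proof (subst sum_distrib_right, subst sum.distrib[symmetric], rule sum.cong[OF refl])
    fix a assume "a \<in> {1..N}"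
    then have "Suc N - a = Suc (N - a)" by auto
    then show "g a * (\<Sum>p\<le>Suc N - a. f p) = g a * f 0 + g a * (\<Sum>p\<le>N - a. f (Suc p))"
      by (simp only: sum.atMost_Suc_shift distrib_left)
  qed
  also have "(\<Sum>a=1..N. g a * (\<Sum>p\<le>N - a. f (Suc p))) = (\<Sum>k=1..N. (\<Sum>a=1..k. g a) * f (Suc N - k))"
    unfolding Suc.IH by (rule sum.cong) (auto simp: Suc_diff_le)
  finally show ?case
    by (simp add: sum.cl_ivl_Suc distrib_right add_ac)
qed simp

lemma mharm_eq_sum_stirling_coeff: "mharm N m = (\<Sum>p\<le>N. fact m * stirling_coeff p m)"
proof (induction m arbitrary: N)
  case 0
  have "(\<Sum>p\<le>N. fact 0 * stirling_coeff p 0) = (\<Sum>p\<le>N. if p = 0 then 1 else 0)"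
    by (rule sum.cong) (auto simp: stirling_coeff_0_right)
  then show ?case by (simp add: mharm_0)
next
  case (Suc m)
  have "mharm N (Suc m) = (\<Sum>a=1..N. (1 / real a) * (\<Sum>p\<le>N - a. fact m * stirling_coeff p m))"
    unfolding mharm_Suc Suc.IH by simp
  also have "\<dots> = (\<Sum>q\<le>N. fact m * (\<Sum>a=1..q. stirling_coeff (q - a) m / a))"
    unfolding sum_triangle_by_diagonals by (simp add: sum_distrib_left)
  also have "\<dots> = (\<Sum>p\<le>N. fact (Suc m) * stirling_coeff p (Suc m))"
    unfolding sum_stirling_coeff_div by (simp add: algebra_simps)
  finally show ?case .
qed

lemma harm2_Suc: "harm2 (Suc N) = harm2 N + 1 / (real (Suc N))^2"
  by (simp add: harm2_def)

lemma sum_harm_diff_div: "(\<Sum>a=1..N. harm (N - a) / real a) = (harm N)^2 - harm2 N"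
proof (induction N)
  case (Suc N)
  have partial_fractions:
    "harm (Suc (N - a)) / a = harm (N - a) / a + (1 / a + 1 / real (Suc (N - a))) / real (Suc N)"
    if "a \<in> {1..N}" for a
  proof -
    define x where "x = real (Suc (N - a))"
    have x_pos: "real a > 0" "x > 0"
      using that by (auto simp: x_def)
    then have "1 / a + 1 / x = (x + a) / (x * a)"
      by (simp add: field_simps)
    moreover have "real (Suc N) = x + a"
      using that by (simp add: x_def)
    ultimately have "(1 / a + 1 / x) / real (Suc N) = 1 / x / a"
      using x_pos by simp
    moreover have "harm (Suc (N - a)) / a = harm (N - a) / a + 1 / x / a"
      by (simp add: x_def harm_Suc divide_inverse distrib_right)
    ultimately show ?thesis
      by (simp add: x_def)
  qed
  have "(\<Sum>a=1..N. 1 / real (Suc (N - a))) = harm N"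
    unfolding sum_reflect_from_1[where g = "\<lambda>i. 1 / real (Suc i)"] harm_altdef
    by (simp add: divide_inverse)
  then have reciprocals: "(\<Sum>a=1..N. 1 / a + 1 / real (Suc (N - a))) = 2 * harm N"
    by (simp add: sum.distrib harm_def divide_inverse)
  have "(\<Sum>a=1..Suc N. harm (Suc N - a) / a) = (\<Sum>a=1..N. harm (Suc (N - a)) / a)"
    by (simp add: sum.cl_ivl_Suc Suc_diff_le harm_def)
  also have "\<dots> = (\<Sum>a=1..N. harm (N - a) / a) + (\<Sum>a=1..N. 1 / a + 1 / real (Suc (N - a))) / real (Suc N)"
    by (simp add: partial_fractions sum.distrib flip: sum_divide_distrib)
  also have "\<dots> = (harm N)^2 - harm2 N + 2 * harm N / real (Suc N)"
    unfolding Suc.IH reciprocals ..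
  also have "\<dots> = (harm (Suc N))^2 - harm2 (Suc N)"
    unfolding harm2_Suc by (simp add: harm_Suc power2_eq_square field_simps del: of_nat_Suc)
  finally show ?case .
qed (simp add: harm_def harm2_def)

lemma mharm_2: "mharm N 2 = (harm N)^2 - harm2 N"
proof -
  have "mharm N 2 = (\<Sum>a=1..N. harm (N - a) / a)"
    unfolding mharm_1[symmetric] Suc_1[symmetric] by (rule mharm_Suc)
  then show ?thesis
    unfolding sum_harm_diff_div .
qed

text \<open>Unsigned Lah numbers, except that \<open>lah 0 0 = 0\<close> rather than 1; only \<open>n \<ge> 1\<close> is ever used.\<close>
definition lah :: "nat \<Rightarrow> nat \<Rightarrow> real" where
  "lah n j = (if j = 0 then 0 else real ((n - 1) choose (j - 1)) * fact n / fact j)"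

lemma lah_0_right [simp]: "lah n 0 = 0"
  by (simp add: lah_def)

lemma lah_eq_0: "n \<ge> 1 \<Longrightarrow> n < j \<Longrightarrow> lah n j = 0"
  by (simp add: lah_def)

lemma of_nat_Suc_mult_choose_Suc:
  "real (Suc k) * real (p choose Suc k) = (real p - real k) * real (p choose k)"
proof (cases "k \<le> p")
  case True
  have "Suc k * (p choose Suc k) = (p - k) * (p choose k)"
    using binomial_absorption[of k p] binomial_absorb_comp[of p k] by simp
  then have "real (Suc k * (p choose Suc k)) = real ((p - k) * (p choose k))"
    by simp
  with True show ?thesis
    by (simp only: of_nat_mult of_nat_diff)
qed (simp add: binomial_eq_0 not_le)

lemma lah_Suc_Suc:
  "lah (Suc (Suc p)) (Suc k) = real (Suc p + Suc k) * lah (Suc p) (Suc k) + lah (Suc p) k"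
proof (cases k)
  case 0
  then show ?thesis
    by (simp add: lah_def fact_Suc[of "Suc p"] algebra_simps del: fact_Suc)
next
  case (Suc i)
  define F where "F = (fact (Suc p) :: real) / fact (Suc (Suc i))"
  have fact_Suc_Suc_i: "fact (Suc (Suc i)) = real (Suc (Suc i)) * (fact (Suc i) :: real)"
    by (simp only: fact_Suc of_nat_Suc)
  have "lah (Suc (Suc p)) (Suc (Suc i)) = real (Suc p choose Suc i) * real (Suc (Suc p)) * F"
    by (simp only: lah_def F_def fact_Suc[of "Suc p"]) (simp del: fact_Suc)
  also have "real (Suc p choose Suc i) * real (Suc (Suc p))
      = real (Suc p + Suc (Suc i)) * real (p choose Suc i) + real (Suc (Suc i)) * real (p choose i)"
    using of_nat_Suc_mult_choose_Suc[of i p] by (simp add: algebra_simps)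
  also have "\<dots> * F = real (Suc p + Suc (Suc i)) * lah (Suc p) (Suc (Suc i)) + lah (Suc p) (Suc i)"
    by (simp add: lah_def F_def fact_Suc_Suc_i field_simps del: fact_Suc of_nat_Suc)
  finally show ?thesis
    using Suc by simp
qed

lemma stirling1s_Suc_Suc: "stirling1s (Suc k) (Suc m) = stirling1s k m - real k * stirling1s k (Suc m)"
proof (cases "m < k")
  case True
  then have "k - m = Suc (k - Suc m)"
    by simp
  then show ?thesis
    by (simp add: stirling1s_def algebra_simps)
qed (simp add: stirling1s_def)

lemma stirling1s_eq_0: "j < m \<Longrightarrow> stirling1s j m = 0"
  by (simp add: stirling1s_def)

lemma stirling_eq_sum_lah_stirling1s:
  "n \<ge> 1 \<Longrightarrow> real (stirling n m) = (\<Sum>j\<le>n. lah n j * stirling1s j m)"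
proof (induction n arbitrary: m rule: nat_induct_at_least)
  case base
  have "stirling1s 1 m = real (stirling 1 m)"
    by (cases m) (auto simp: stirling1s_def)
  then show ?case
    by (simp add: lah_def)
next
  case (Suc n)
  show ?case
  proof (cases m)
    case 0
    have zero: "lah (Suc n) j * stirling1s j 0 = 0" for j
      by (cases j) (simp_all add: stirling1s_def)
    show ?thesis
      unfolding 0 zero by simp
  next
    case (Suc i)
    obtain p where p: "n = Suc p"
      using \<open>n \<ge> 1\<close> by (cases n) auto
    define g where "g j = lah n j * stirling1s j (Suc i)" for j
    have g_0: "g 0 = 0" and g_Suc_n: "g (Suc n) = 0"
      using \<open>n \<ge> 1\<close> by (simp_all add: g_def lah_eq_0)
    have "(\<Sum>j\<le>Suc n. lah (Suc n) j * stirling1s j m)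
          = (\<Sum>j\<le>n. lah (Suc n) (Suc j) * stirling1s (Suc j) (Suc i))"
      by (subst sum.atMost_Suc_shift) (simp add: Suc)
    also have "\<dots> = (\<Sum>j\<le>n. real (n + Suc j) * g (Suc j))
                   + (\<Sum>j\<le>n. lah n j * stirling1s (Suc j) (Suc i))"
      unfolding g_def p by (simp add: lah_Suc_Suc sum.distrib algebra_simps)
    also have "(\<Sum>j\<le>n. real (n + Suc j) * g (Suc j)) = (\<Sum>j\<le>n. real (n + j) * g j)"
      using sum.atMost_Suc_shift[of "\<lambda>j. real (n + j) * g j" n] g_0 g_Suc_n by simp
    also have "(\<Sum>j\<le>n. lah n j * stirling1s (Suc j) (Suc i))
               = (\<Sum>j\<le>n. lah n j * stirling1s j i) - (\<Sum>j\<le>n. real j * g j)"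
      unfolding g_def stirling1s_Suc_Suc by (simp add: sum_subtractf algebra_simps)
    also have "(\<Sum>j\<le>n. real (n + j) * g j) = real n * (\<Sum>j\<le>n. g j) + (\<Sum>j\<le>n. real j * g j)"
      by (simp add: sum.distrib sum_distrib_left algebra_simps)
    finally have "(\<Sum>j\<le>Suc n. lah (Suc n) j * stirling1s j m)
                  = real n * (\<Sum>j\<le>n. g j) + (\<Sum>j\<le>n. lah n j * stirling1s j i)"
      by simp
    also have "\<dots> = real n * real (stirling n (Suc i)) + real (stirling n i)"
      unfolding g_def Suc.IH[of "Suc i"] Suc.IH[of i] ..
    also have "\<dots> = real (stirling (Suc n) m)"
      by (simp add: Suc)
    finally show ?thesis ..
  qed
qed

lemma sum_choose_stirling1s_div_fact:
  assumes "m \<ge> 1"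
  shows "(\<Sum>j=m..N+1. real (N choose (j - 1)) * stirling1s j m / fact j) = stirling_coeff (N + 1) m"
proof -
  have "stirling_coeff (N + 1) m = (\<Sum>j\<le>N + 1. lah (N + 1) j * stirling1s j m / fact (N + 1))"
    unfolding stirling_coeff_def stirling_eq_sum_lah_stirling1s[OF le_add2] sum_divide_distrib ..
  also have "\<dots> = (\<Sum>j=m..N+1. lah (N + 1) j * stirling1s j m / fact (N + 1))"
    by (rule sum.mono_neutral_right) (auto simp: stirling1s_eq_0)
  also have "\<dots> = (\<Sum>j=m..N+1. real (N choose (j - 1)) * stirling1s j m / fact j)"
    by (rule sum.cong) (use assms in \<open>auto simp: lah_def\<close>)
  finally show ?thesis ..
qed

lemma sum_harm_mult_stirling_coeff:
  assumes "m \<ge> 1"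
  shows "(\<Sum>k=1..n. harm k * stirling_coeff (n - k + 1) m) = mharm (n + 1) (m + 1) / fact m"
proof -
  have "mharm (n + 1) (m + 1)
        = (\<Sum>a=1..n+1. inverse (real a) * (\<Sum>p\<le>n + 1 - a. fact m * stirling_coeff p m))"
    by (simp add: mharm_Suc mharm_eq_sum_stirling_coeff[symmetric] divide_inverse mult.commute)
  also have "\<dots> = (\<Sum>k=1..n+1. harm k * (fact m * stirling_coeff (n + 1 - k) m))"
    unfolding sum_triangle_by_partial_sums harm_def ..
  also have "\<dots> = (\<Sum>k=1..n. harm k * (fact m * stirling_coeff (n + 1 - k) m))"
    using assms by (cases m) (auto simp: sum.cl_ivl_Suc)
  also have "\<dots> = fact m * (\<Sum>k=1..n. harm k * stirling_coeff (n - k + 1) m)"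
    by (simp add: sum_distrib_left algebra_simps Suc_diff_le)
  finally show ?thesis
    by simp
qed

theorem theorem7:
  fixes m n :: nat
  assumes "m \<ge> 1" and "n \<ge> 1"
  shows "((\<Sum>k=1..n. (harm k :: real) *
            (\<Sum>j=m..n-k+1. real ((n-k) choose (j-1)) * stirling1s j m / fact j))
         = mharm (n+1) (m+1) / fact m) \<and>
         ((\<Sum>k=1..n. (harm k :: real) / real (n-k+1))
         = (harm (n+1))^2 - harm2 (n+1))"
proof
  show "(\<Sum>k=1..n. (harm k :: real) *
            (\<Sum>j=m..n-k+1. real ((n-k) choose (j-1)) * stirling1s j m / fact j))
         = mharm (n+1) (m+1) / fact m"
    unfolding sum_choose_stirling1s_div_fact[OF \<open>m \<ge> 1\<close>]
    by (rule sum_harm_mult_stirling_coeff[OF \<open>m \<ge> 1\<close>])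
  have "stirling_coeff (n - k + 1) 1 = 1 / real (n - k + 1)" for k
    by (rule stirling_coeff_1) simp
  then have "(\<Sum>k=1..n. (harm k :: real) / real (n-k+1)) = (\<Sum>k=1..n. harm k * stirling_coeff (n - k + 1) 1)"
    by simp
  also have "\<dots> = mharm (n + 1) 2"
    using sum_harm_mult_stirling_coeff[of 1 n] by (simp add: numeral_2_eq_2)
  finally show "(\<Sum>k=1..n. (harm k :: real) / real (n-k+1)) = (harm (n+1))^2 - harm2 (n+1)"
    unfolding mharm_2 .
qed

end
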